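(* Let $G=(V,E)$ be a temporal network, let $\pi$ be an ordering of $V$, and let $\delta\ge 0$. Let $e=(v,u,t)\in E$ be a temporal edge with $\pi(u)<\pi(v)$, and let $w\in N^{+}_{\pi}(u)$ be a vertex adjacent to $v$ in $G_S$. Put $L_2=E_{v,w}$ and $L_3=E_{u,w}$. Let $L_{12}[e]$ be the first edge of $L_2$ (in sorted order) whose timestamp is at least $t(e)$, and let $L_{13}[e]$ be the last edge of $L_3$ whose timestamp is at most $t(e)+\delta$. Then $e$ forms at least one $\delta$-temporal triangle with $w$ if and only if $L_{12}[e]$ and $L_{13}[e]$ exist and $$t(e)\le t(L_{12}[e])\le t(L_{13}[e])\le t(e)+\delta.$$
   Context: A temporal network $G=(V,E)$ is a finite multiset of temporal edges $(x,y,t)$ with $x\neq y\in V$ and timestamp $t=t(e)\in\mathbb{R}$; the edge goes from $x$ to $y$, and parallel edges (in both directions) are allowed. For distinct $x,y\in V$, $E_{x,y}$ denotes the list of temporal edges from $x$ to $y$, sorted by increasing timestamp. $G_S$ is the simple undirected graph on $V$ with $\{x,y\}$ an edge iff there is at least one temporal edge between $x$ and $y$; $N(x)$ is the neighbourhood of $x$ in $G_S$. For an ordering $\pi$ of $V$, $N^{+}_{\pi}(x)=\{y\in N(x):\pi(x)<\pi(y)\}$. For $\delta\ge 0$, a temporal edge $e=(a,b,t)$ forms a $\delta$-temporal triangle with a vertex $c$ if there exist temporal edges $(a,c,t_2)$ and $(b,c,t_3)$ in $E$ with $t\le t_2\le t_3\le t+\delta$. *)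

theory Defs
  imports Main "HOL-Library.Multiset" Complex_Main
begin

type_synonym 'v tedge = "'v \<times> 'v \<times> real"

definition src :: "'v tedge \<Rightarrow> 'v" where "src e = fst e"
definition dst :: "'v tedge \<Rightarrow> 'v" where "dst e = fst (snd e)"
definition tstamp :: "'v tedge \<Rightarrow> real" where "tstamp e = snd (snd e)"

definition temporal_network :: "'v set \<Rightarrow> 'v tedge multiset \<Rightarrow> bool" where
  "temporal_network V E \<longleftrightarrow> finite V \<and>
     (\<forall>e \<in># E. src e \<in> V \<and> dst e \<in> V \<and> src e \<noteq> dst e)"

text \<open>E_{x,y}: the list of temporal edges from x to y, sorted by increasing timestamp
  (ties are broken arbitrarily; the list is any such sorting).\<close>
definition edges_between :: "'v tedge multiset \<Rightarrow> 'v \<Rightarrow> 'v \<Rightarrow> 'v tedge list" where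
  "edges_between E x y = (SOME xs. mset xs = filter_mset (\<lambda>e. src e = x \<and> dst e = y) E
                                    \<and> sorted (map tstamp xs))"

definition adj :: "'v tedge multiset \<Rightarrow> 'v \<Rightarrow> 'v \<Rightarrow> bool" where
  "adj E x y \<longleftrightarrow> x \<noteq> y \<and> (\<exists>e \<in># E. (src e = x \<and> dst e = y) \<or> (src e = y \<and> dst e = x))"

definition nbhd :: "'v set \<Rightarrow> 'v tedge multiset \<Rightarrow> 'v \<Rightarrow> 'v set" where
  "nbhd V E x = {y \<in> V. adj E x y}"

definition nbhd_plus :: "'v set \<Rightarrow> 'v tedge multiset \<Rightarrow> ('v \<Rightarrow> nat) \<Rightarrow> 'v \<Rightarrow> 'v set" where
  "nbhd_plus V E \<pi> x = {y \<in> nbhd V E x. \<pi> x < \<pi> y}"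

definition forms_triangle :: "'v tedge multiset \<Rightarrow> real \<Rightarrow> 'v tedge \<Rightarrow> 'v \<Rightarrow> bool" where
  "forms_triangle E \<delta> e c \<longleftrightarrow>
     (\<exists>e2 \<in># E. \<exists>e3 \<in># E. src e2 = src e \<and> dst e2 = c \<and> src e3 = dst e \<and> dst e3 = c \<and>
        tstamp e \<le> tstamp e2 \<and> tstamp e2 \<le> tstamp e3 \<and> tstamp e3 \<le> tstamp e + \<delta>)"

definition first_after :: "'v tedge list \<Rightarrow> real \<Rightarrow> 'v tedge option" where
  "first_after L t = find (\<lambda>e. t \<le> tstamp e) L"

definition last_before :: "'v tedge list \<Rightarrow> real \<Rightarrow> 'v tedge option" where
  "last_before L t = find (\<lambda>e. tstamp e \<le> t) (rev L)"

end

theory Submission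
  imports Defs
begin

text \<open>Since E_{v,w} and E_{u,w} are sorted by timestamp, L12[e] carries the least timestamp
  \<open>\<ge> t(e)\<close> among the edges from v to w, and L13[e] the greatest timestamp \<open>\<le> t(e) + \<delta>\<close> among
  those from u to w. So timestamps \<open>t(e) \<le> t\<^sub>2 \<le> t\<^sub>3 \<le> t(e) + \<delta>\<close> can be chosen exactly when
  these two extremal edges exist and are in the right order.\<close>

lemma tedge_components [simp]:
  "src (x, y, t) = x" "dst (x, y, t) = y" "tstamp (x, y, t) = t"
  by (simp_all add: src_def dst_def tstamp_def)

lemma find_Some_imp_mem:
  "find P xs = Some x \<Longrightarrow> x \<in> set xs \<and> P x"
  by (induction xs) (auto split: if_splits)

lemma sorted_find_Some_le:
  fixes f :: "'a \<Rightarrow> 'b::linorder"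
  shows "sorted (map f xs) \<Longrightarrow> find P xs = Some x \<Longrightarrow> y \<in> set xs \<Longrightarrow> P y \<Longrightarrow> f x \<le> f y"
  by (induction xs) (auto split: if_splits)

lemma sorted_find_rev_Some_ge:
  fixes f :: "'a \<Rightarrow> 'b::linorder"
  shows "sorted (map f xs) \<Longrightarrow> find P (rev xs) = Some x \<Longrightarrow> y \<in> set xs \<Longrightarrow> P y \<Longrightarrow> f y \<le> f x"
  by (induction xs rule: rev_induct) (auto simp: sorted_append split: if_splits)

lemma edges_between_spec:
  "mset (edges_between E x y) = filter_mset (\<lambda>e. src e = x \<and> dst e = y) E \<and>
   sorted (map tstamp (edges_between E x y))"
proof -
  obtain xs where "mset xs = filter_mset (\<lambda>e. src e = x \<and> dst e = y) E"
    using ex_mset by blast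
  then have "mset (sort_key tstamp xs) = filter_mset (\<lambda>e. src e = x \<and> dst e = y) E \<and>
      sorted (map tstamp (sort_key tstamp xs))"
    by simp
  then show ?thesis
    unfolding edges_between_def by (rule someI)
qed

lemma sorted_edges_between: "sorted (map tstamp (edges_between E x y))"
  using edges_between_spec[of E x y] by blast

lemma set_edges_between:
  "e \<in> set (edges_between E x y) \<longleftrightarrow> e \<in># E \<and> src e = x \<and> dst e = y"
  by (metis (mono_tags, lifting) edges_between_spec count_filter_mset in_multiset_in_set
      set_mset_mset count_eq_zero_iff)

lemma first_after_Some:
  "first_after L t = Some x \<Longrightarrow> x \<in> set L \<and> t \<le> tstamp x"
  unfolding first_after_def by (rule find_Some_imp_mem)

lemma last_before_Some:
  "last_before L s = Some x \<Longrightarrow> x \<in> set L \<and> tstamp x \<le> s"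
  unfolding last_before_def using find_Some_imp_mem by fastforce

lemma first_after_le_iff:
  assumes "sorted (map tstamp L)"
  shows "(\<exists>x. first_after L t = Some x \<and> tstamp x \<le> s) \<longleftrightarrow>
         (\<exists>e \<in> set L. t \<le> tstamp e \<and> tstamp e \<le> s)"
proof
  assume "\<exists>e \<in> set L. t \<le> tstamp e \<and> tstamp e \<le> s"
  then obtain e where e: "e \<in> set L" "t \<le> tstamp e" "tstamp e \<le> s" by blast
  then obtain x where x: "first_after L t = Some x"
    unfolding first_after_def by (metis find_None_iff option.exhaust)
  have "tstamp x \<le> tstamp e"
    using sorted_find_Some_le[OF assms x[unfolded first_after_def] e(1)] e(2) by simp
  with x e(3) show "\<exists>x. first_after L t = Some x \<and> tstamp x \<le> s" by auto
qed (use first_after_Some in blast)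

lemma last_before_ge_iff:
  assumes "sorted (map tstamp L)"
  shows "(\<exists>x. last_before L s = Some x \<and> r \<le> tstamp x) \<longleftrightarrow>
         (\<exists>e \<in> set L. r \<le> tstamp e \<and> tstamp e \<le> s)"
proof
  assume "\<exists>e \<in> set L. r \<le> tstamp e \<and> tstamp e \<le> s"
  then obtain e where e: "e \<in> set L" "r \<le> tstamp e" "tstamp e \<le> s" by blast
  then obtain x where x: "last_before L s = Some x"
    unfolding last_before_def by (metis find_None_iff option.exhaust set_rev)
  have "tstamp e \<le> tstamp x"
    using sorted_find_rev_Some_ge[OF assms x[unfolded last_before_def] e(1)] e(3) by simp
  with x e(2) show "\<exists>x. last_before L s = Some x \<and> r \<le> tstamp x" by auto
qed (use last_before_Some in blast)

theorem theorem3p2: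
  fixes V :: "'v set" and E :: "'v tedge multiset" and \<pi> :: "'v \<Rightarrow> nat"
    and \<delta> :: real and v u w :: 'v and t :: real
  assumes "temporal_network V E"
    and "inj_on \<pi> V"
    and "\<delta> \<ge> 0"
    and "(v, u, t) \<in># E"
    and "\<pi> u < \<pi> v"
    and "w \<in> nbhd_plus V E \<pi> u"
    and "adj E v w"
  shows "forms_triangle E \<delta> (v, u, t) w \<longleftrightarrow>
    (\<exists>e12 e13. first_after (edges_between E v w) t = Some e12 \<and>
               last_before (edges_between E u w) (t + \<delta>) = Some e13 \<and>
               t \<le> tstamp e12 \<and> tstamp e12 \<le> tstamp e13 \<and> tstamp e13 \<le> t + \<delta>)"
proof -
  define L2 L3 where "L2 = edges_between E v w" and "L3 = edges_between E u w"
  have "forms_triangle E \<delta> (v, u, t) w \<longleftrightarrow>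
      (\<exists>e3 \<in> set L3. (\<exists>e2 \<in> set L2. t \<le> tstamp e2 \<and> tstamp e2 \<le> tstamp e3) \<and> tstamp e3 \<le> t + \<delta>)"
    unfolding forms_triangle_def L2_def L3_def Bex_def set_edges_between by auto
  also have "\<dots> \<longleftrightarrow>
      (\<exists>e3 \<in> set L3. (\<exists>e12. first_after L2 t = Some e12 \<and> tstamp e12 \<le> tstamp e3) \<and> tstamp e3 \<le> t + \<delta>)"
    unfolding L2_def first_after_le_iff[OF sorted_edges_between] ..
  also have "\<dots> \<longleftrightarrow>
      (\<exists>e12. first_after L2 t = Some e12 \<and> (\<exists>e3 \<in> set L3. tstamp e12 \<le> tstamp e3 \<and> tstamp e3 \<le> t + \<delta>))"
    by blast
  also have "\<dots> \<longleftrightarrow>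
      (\<exists>e12. first_after L2 t = Some e12 \<and> (\<exists>e13. last_before L3 (t + \<delta>) = Some e13 \<and> tstamp e12 \<le> tstamp e13))"
    unfolding L3_def last_before_ge_iff[OF sorted_edges_between] ..
  finally show ?thesis
    unfolding L2_def L3_def by (blast dest: first_after_Some last_before_Some)
qed

end
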